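(* In the two-project discovery model described in the context, let $\mu_1=-\mu<0\le c\mu=\mu_2$ with $\mu>0$ and $c\in[0,1)$, and let $\sigma_1<\sigma_2$. Define $$c^*:=\frac{\rho\sigma_2}{\sigma_1+2\rho\sigma_2},\qquad c^{**}:=\frac{\sigma_2}{\rho\sigma_1+2\sigma_2}.$$ Then: 1. For any $c\in(c^*,c^{**})$ there exists $\underline{\mu}$ such that discovering project 1 is better than discovering project 2 for all $\mu>\underline{\mu}$. 2. For any $c\in(c^{**},1)$ there exists $\bar\mu$ such that discovering project 2 is better than discovering project 1 for all $\mu>\bar\mu$.
   Context: Model. There are two projects $i\in\{1,2\}$. The agent's values $v=(v_1,v_2)\in\mathbb{R}^2$ are drawn from a common prior that is bivariate normal with means $\mu_1,\mu_2$, standard deviations $\sigma_1,\sigma_2>0$ and correlation $\rho\in(0,1)$. The principal has weights $w_1,w_2\in[0,1]$ with $w_1+w_2=1$. Timing: (1) the principal chooses whether to publicly discover $v_1$, $v_2$, or neither; (2) the chosen value is publicly revealed and the agent forms a posterior by Bayes' rule; (3) knowing the revealed value, the principal proposes a subset $S\subseteq\{1,2\}$; (4) the agent approves iff $\sum_{i\in S}\mathbb{E}[v_i\mid\text{revealed information}]\ge 0$; (5) the principal receives $\sum_{i\in S}w_i$ if approved and $0$ otherwise. The principal chooses the proposal to maximize her payoff given the revealed information; "better" means strictly higher ex-ante expected payoff for the principal. *)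

theory Defs
  imports "HOL-Probability.Probability"
begin

text \<open>Two-project discovery model. Projects are indexed by 1 and 2.
  Prior: bivariate normal with means m i, standard deviations s i, correlation rho.\<close>

text \<open>Posterior mean of v_i after the value v_j = x has been publicly revealed
  (Bayes' rule for the bivariate normal prior).\<close>
definition post_mean :: "(nat \<Rightarrow> real) \<Rightarrow> (nat \<Rightarrow> real) \<Rightarrow> real \<Rightarrow> nat \<Rightarrow> real \<Rightarrow> nat \<Rightarrow> real" where
  "post_mean m s rho j x i = (if i = j then x else m i + rho * s i / s j * (x - m j))"

definition approves :: "(nat \<Rightarrow> real) \<Rightarrow> nat set \<Rightarrow> bool" where
  "approves e S \<longleftrightarrow> (\<Sum>i\<in>S. e i) \<ge> 0"

definition proposal_payoff :: "(nat \<Rightarrow> real) \<Rightarrow> (nat \<Rightarrow> real) \<Rightarrow> nat set \<Rightarrow> real" where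
  "proposal_payoff w e S = (if approves e S then (\<Sum>i\<in>S. w i) else 0)"

definition best_payoff :: "(nat \<Rightarrow> real) \<Rightarrow> (nat \<Rightarrow> real) \<Rightarrow> real" where
  "best_payoff w e = Max (proposal_payoff w e ` Pow {1, 2})"

definition discovery_value ::
  "(nat \<Rightarrow> real) \<Rightarrow> (nat \<Rightarrow> real) \<Rightarrow> real \<Rightarrow> (nat \<Rightarrow> real) \<Rightarrow> nat \<Rightarrow> real" where
  "discovery_value m s rho w j =
     (LINT x|lborel. normal_density (m j) (s j) x * best_payoff w (post_mean m s rho j x))"

end

theory Submission
  imports Defs "HOL-Real_Asymp.Real_Asymp"
begin

text \<open>Write the revealed value as m_j + s_j z with z standard normal. Both posterior means
  are affine in z, so the principal obtains project 1 exactly when z \<ge> a_j \<mu> (the bundle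
  is approved) and project 2 unless z < -b_j \<mu>. Her value from discovering j is therefore
  w1 T(a_j \<mu>) + w2 (1 - T(b_j \<mu>)), where T is the Gaussian upper tail. As
  exp(-(t+1)^2/2) / sqrt(2\<pi>) \<le> T(t) \<le> exp(-t^2/2), for large \<mu> the comparison is decided
  by the smallest of the four rates: b_2 = c/\<sigma>2 if c < c** (project 1 wins) and
  a_2 = (1-c)/(\<rho>\<sigma>1 + \<sigma>2) if c > c** (project 2 wins). The bound c* only serves to make
  c positive.\<close>

lemma integral_normal_density_standardize:
  fixes f :: "real \<Rightarrow> real" and m \<sigma> :: real
  assumes "0 < \<sigma>"
  shows "(LINT x|lborel. normal_density m \<sigma> x * f x)
    = (LINT z|lborel. std_normal_density z * f (m + \<sigma> * z))"
proof -
  have "(LINT x|lborel. normal_density m \<sigma> x * f x)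
      = (LINT z|lborel. \<sigma> * (normal_density m \<sigma> (m + \<sigma> * z) * f (m + \<sigma> * z)))"
    using lborel_integral_real_affine[where c = \<sigma> and t = m and f = "\<lambda>x. normal_density m \<sigma> x * f x"]
      assms by simp
  also have "\<dots> = (LINT z|lborel. std_normal_density z * f (m + \<sigma> * z))"
  proof (rule Bochner_Integration.integral_cong[OF refl])
    fix z
    have "sqrt (2 * pi * \<sigma>\<^sup>2) = \<sigma> * sqrt (2 * pi)"
      using assms by (simp add: real_sqrt_mult)
    moreover have "(\<sigma> * z)\<^sup>2 / (2 * \<sigma>\<^sup>2) = z\<^sup>2 / 2"
      using assms by (simp add: power_mult_distrib)
    ultimately show "\<sigma> * (normal_density m \<sigma> (m + \<sigma> * z) * f (m + \<sigma> * z))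
        = std_normal_density z * f (m + \<sigma> * z)"
      using assms unfolding normal_density_def by (simp add: field_simps)
  qed
  finally show ?thesis .
qed

definition std_normal_tail :: "real \<Rightarrow> real" where
  "std_normal_tail t = (LINT z|lborel. std_normal_density z * indicator {t..} z)"

lemma integrable_std_normal_density_indicator:
  "A \<in> sets borel \<Longrightarrow> integrable lborel (\<lambda>z. std_normal_density z * indicator A z)"
  by (intro integrable_real_mult_indicator) auto

lemma std_normal_tail_nonneg: "0 \<le> std_normal_tail t"
  unfolding std_normal_tail_def by (rule integral_nonneg_AE) auto

lemma integral_std_normal_density_lower_tail:
  "(LINT z|lborel. std_normal_density z * indicator {..< -t} z) = std_normal_tail t"
proof -
  have "(LINT z|lborel. std_normal_density z * indicator {..< -t} z)
      = (LINT z|lborel. std_normal_density z * indicator {t<..} z)"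
    using lborel_integral_real_affine[where c = "-1" and t = 0
        and f = "\<lambda>z. std_normal_density z * indicator {..< -t} z"]
    by (simp add: std_normal_density_def indicator_def)
  also have "\<dots> = std_normal_tail t"
    unfolding std_normal_tail_def
    by (intro integral_cong_AE) (auto intro!: eventually_mono[OF AE_lborel_singleton[of t]]
        simp: indicator_def)
  finally show ?thesis .
qed

lemma integral_std_normal_density_indicators:
  fixes w1 w2 t1 t2 :: real
  shows "(LINT z|lborel. std_normal_density z * (w1 * indicator {t1..} z + w2 * indicator {- t2..} z))
    = w1 * std_normal_tail t1 + w2 * (1 - std_normal_tail t2)"
proof -
  have "(LINT z|lborel. std_normal_density z * (w1 * indicator {t1..} z + w2 * indicator {- t2..} z))
      = (LINT z|lborel. w1 * (std_normal_density z * indicator {t1..} z) + w2 * std_normal_density z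
          - w2 * (std_normal_density z * indicator {..< - t2} z))"
    by (intro Bochner_Integration.integral_cong) (auto simp: indicator_def algebra_simps)
  also have "\<dots> = w1 * std_normal_tail t1 + w2 * (1 - std_normal_tail t2)"
    by (simp add: integrable_std_normal_density_indicator integral_std_normal_density_lower_tail
        flip: std_normal_tail_def) (simp add: algebra_simps)
  finally show ?thesis .
qed

text \<open>For z \<ge> t \<ge> 0 we have z^2 \<ge> t^2 + (z - t)^2, so on the tail the density is
  dominated by exp(-t^2/2) times the normal density centred at t.\<close>

lemma std_normal_tail_le:
  assumes "0 \<le> t"
  shows "std_normal_tail t \<le> exp (- t\<^sup>2 / 2)"
proof -
  have "std_normal_tail t \<le> (LINT z|lborel. exp (- t\<^sup>2 / 2) * normal_density t 1 z)"
    unfolding std_normal_tail_def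
  proof (rule integral_mono)
    fix z
    show "std_normal_density z * indicator {t..} z \<le> exp (- t\<^sup>2 / 2) * normal_density t 1 z"
    proof (cases "t \<le> z")
      case True
      then have "t\<^sup>2 + (z - t)\<^sup>2 \<le> z\<^sup>2"
        using assms by (simp add: power2_eq_square algebra_simps mult_left_mono)
      then have "exp (- z\<^sup>2 / 2) \<le> exp (- t\<^sup>2 / 2) * exp (- (z - t)\<^sup>2 / 2)"
        by (simp flip: exp_add)
      then show ?thesis
        using True by (simp add: normal_density_def std_normal_density_def divide_right_mono)
    qed simp
  qed (auto intro: integrable_std_normal_density_indicator)
  then show ?thesis by simp
qed

lemma std_normal_tail_ge:
  assumes "0 \<le> t"
  shows "std_normal_density (t + 1) \<le> std_normal_tail t"
proof -
  have "std_normal_density (t + 1)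
      = (LINT z|lborel. std_normal_density (t + 1) * indicator {t..t + 1} z)"
    by simp
  also have "\<dots> \<le> std_normal_tail t"
    unfolding std_normal_tail_def
  proof (rule integral_mono)
    fix z
    show "std_normal_density (t + 1) * indicator {t..t + 1} z
      \<le> std_normal_density z * indicator {t..} z"
    proof (cases "t \<le> z \<and> z \<le> t + 1")
      case True
      then have "z\<^sup>2 \<le> (t + 1)\<^sup>2" using assms by (intro power_mono) auto
      then show ?thesis using True by (simp add: std_normal_density_def divide_right_mono)
    qed (auto simp: indicator_def)
  qed (auto intro: integrable_std_normal_density_indicator)
  finally show ?thesis .
qed

lemma std_normal_tail_negligible:
  fixes a b K :: real
  assumes "0 \<le> b" "b < a"
  shows "eventually (\<lambda>\<mu>. K * std_normal_tail (a * \<mu>) < std_normal_tail (b * \<mu>)) at_top"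
proof -
  define d where "d = a\<^sup>2 - b\<^sup>2"
  have "0 < d" unfolding d_def using assms by (simp add: power_strict_mono)
  then have "eventually (\<lambda>\<mu>. \<bar>K\<bar> * sqrt (2 * pi) * exp (- d / 2 * \<mu>\<^sup>2 + b * \<mu> + 1 / 2) < 1) at_top"
    by real_asymp
  then show ?thesis
    using eventually_ge_at_top[of 0]
  proof eventually_elim
    case (elim \<mu>)
    define E where "E = exp (- d / 2 * \<mu>\<^sup>2 + b * \<mu> + 1 / 2)"
    have "exp (- (a * \<mu>)\<^sup>2 / 2) = exp (- (b * \<mu> + 1)\<^sup>2 / 2) * E"
      unfolding E_def exp_add[symmetric]
      by (rule arg_cong[where f = exp]) (simp add: d_def power2_eq_square field_simps)
    then have "\<bar>K\<bar> * exp (- (a * \<mu>)\<^sup>2 / 2) = exp (- (b * \<mu> + 1)\<^sup>2 / 2) * (\<bar>K\<bar> * E)"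
      by simp
    also have "\<dots> < exp (- (b * \<mu> + 1)\<^sup>2 / 2) * (1 / sqrt (2 * pi))"
      using elim(1) unfolding E_def
      by (intro mult_strict_left_mono) (simp_all add: pos_less_divide_eq ac_simps)
    also have "\<dots> = std_normal_density (b * \<mu> + 1)"
      by (simp add: std_normal_density_def)
    finally have "\<bar>K\<bar> * exp (- (a * \<mu>)\<^sup>2 / 2) < std_normal_density (b * \<mu> + 1)" .
    have "K * std_normal_tail (a * \<mu>) \<le> \<bar>K\<bar> * std_normal_tail (a * \<mu>)"
      using std_normal_tail_nonneg by (intro mult_right_mono) auto
    also have "\<dots> \<le> \<bar>K\<bar> * exp (- (a * \<mu>)\<^sup>2 / 2)"
      using assms elim(2) by (intro mult_left_mono std_normal_tail_le) auto
    also have "\<dots> < std_normal_density (b * \<mu> + 1)" by fact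
    also have "\<dots> \<le> std_normal_tail (b * \<mu>)"
      using assms elim(2) by (intro std_normal_tail_ge) simp
    finally show ?case .
  qed
qed

lemma slowest_tail_dominates:
  fixes w1 w2 a1 a2 b1 b2 :: real
  assumes "0 < w1" "0 < w2" "0 \<le> b2" "b2 < a2" "b2 < b1"
  shows "eventually (\<lambda>\<mu>. w1 * std_normal_tail (a2 * \<mu>) + w2 * std_normal_tail (b1 * \<mu>)
                         < w1 * std_normal_tail (a1 * \<mu>) + w2 * std_normal_tail (b2 * \<mu>)) at_top"
  using std_normal_tail_negligible[OF \<open>0 \<le> b2\<close> \<open>b2 < a2\<close>, of "2 * w1 / w2"]
    std_normal_tail_negligible[OF \<open>0 \<le> b2\<close> \<open>b2 < b1\<close>, of 2]
proof eventually_elim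
  case (elim \<mu>)
  have "w1 * std_normal_tail (a2 * \<mu>) < w2 / 2 * std_normal_tail (b2 * \<mu>)"
    using elim(1) assms by (simp add: field_simps)
  moreover have "w2 * std_normal_tail (b1 * \<mu>) < w2 / 2 * std_normal_tail (b2 * \<mu>)"
    using elim(2) assms by simp
  moreover have "0 \<le> w1 * std_normal_tail (a1 * \<mu>)"
    using assms std_normal_tail_nonneg by simp
  ultimately show ?case by linarith
qed

text \<open>Since w1 + w2 = 1, the bundle is the most valuable proposal, so the principal obtains
  project i iff the bundle or project i alone is approved.\<close>

lemma best_payoff_two_projects:
  fixes w1 w2 :: real and e :: "nat \<Rightarrow> real"
  assumes "0 < w1" "0 < w2" "w1 + w2 = 1"
  shows "best_payoff (\<lambda>i. if i = 1 then w1 else w2) e =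
    w1 * of_bool (0 \<le> e 1 + e 2 \<or> 0 \<le> e 1) + w2 * of_bool (0 \<le> e 1 + e 2 \<or> 0 \<le> e 2)"
proof -
  let ?w = "\<lambda>i::nat. if i = 1 then w1 else w2"
  have "Pow {1::nat, 2} = {{}, {1}, {2}, {1, 2}}" by auto
  then have "best_payoff ?w e = Max {proposal_payoff ?w e {}, proposal_payoff ?w e {1},
      proposal_payoff ?w e {2}, proposal_payoff ?w e {1, 2}}"
    unfolding best_payoff_def by simp
  also have "\<dots> = Max {0, w1 * of_bool (0 \<le> e 1), w2 * of_bool (0 \<le> e 2), of_bool (0 \<le> e 1 + e 2)}"
    using assms by (simp add: proposal_payoff_def approves_def)
  also have "\<dots> = w1 * of_bool (0 \<le> e 1 + e 2 \<or> 0 \<le> e 1) + w2 * of_bool (0 \<le> e 1 + e 2 \<or> 0 \<le> e 2)"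
    using assms by (auto simp: max_def)
  finally show ?thesis .
qed

lemma approval_thresholds:
  fixes p q c \<mu> z :: real
  assumes "0 < p" "0 < q" "0 \<le> c" "c < 1" "0 < \<mu>"
  shows "(0 \<le> (- \<mu> + p * z) + (c * \<mu> + q * z) \<or> 0 \<le> - \<mu> + p * z) \<longleftrightarrow> (1 - c) / (p + q) * \<mu> \<le> z"
      (is "?first \<longleftrightarrow> _")
    and "(0 \<le> (- \<mu> + p * z) + (c * \<mu> + q * z) \<or> 0 \<le> c * \<mu> + q * z) \<longleftrightarrow> - (c / q * \<mu>) \<le> z"
      (is "?second \<longleftrightarrow> _")
proof -
  have "(1 - c) / (p + q) * \<mu> \<le> z \<longleftrightarrow> 0 \<le> (- \<mu> + p * z) + (c * \<mu> + q * z)"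
    using assms by (simp add: pos_divide_le_eq algebra_simps)
  moreover have "0 \<le> (- \<mu> + p * z) + (c * \<mu> + q * z)" if "0 \<le> - \<mu> + p * z"
  proof -
    have "0 < z" using that assms by (smt (verit) mult_nonpos_nonneg mult_nonneg_nonpos)
    then show ?thesis using that assms by (simp add: add_nonneg_nonneg)
  qed
  ultimately show "?first \<longleftrightarrow> (1 - c) / (p + q) * \<mu> \<le> z"
    by blast
  have "- (c / q * \<mu>) \<le> z \<longleftrightarrow> 0 \<le> c * \<mu> + q * z"
    using assms by (simp add: field_simps) linarith
  moreover have "0 \<le> c * \<mu> + q * z" if "0 \<le> (- \<mu> + p * z) + (c * \<mu> + q * z)"
  proof -
    have "(1 - c) * \<mu> \<le> (p + q) * z" using that by (simp add: algebra_simps)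
    then have "0 < z" using assms by (smt (verit) mult_pos_pos mult_nonneg_nonpos)
    then show ?thesis using assms by simp
  qed
  ultimately show "?second \<longleftrightarrow> - (c / q * \<mu>) \<le> z"
    by blast
qed

text \<open>p and q are the coefficients of the standardised revealed value in the posterior means of
  v1 and v2 after discovering project j.\<close>

lemma discovery_value_eq_tails:
  fixes \<sigma>1 \<sigma>2 \<rho> w1 w2 c \<mu> :: real and j :: nat
  assumes "0 < \<sigma>1" "0 < \<sigma>2" "0 < \<rho>" "0 < w1" "0 < w2" "w1 + w2 = 1"
    and "0 \<le> c" "c < 1" "0 < \<mu>" "j = 1 \<or> j = 2"
  defines "p \<equiv> if j = 1 then \<sigma>1 else \<rho> * \<sigma>1" and "q \<equiv> if j = 1 then \<rho> * \<sigma>2 else \<sigma>2"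
  shows "discovery_value (\<lambda>i. if i = 1 then - \<mu> else c * \<mu>) (\<lambda>i. if i = 1 then \<sigma>1 else \<sigma>2) \<rho>
           (\<lambda>i. if i = 1 then w1 else w2) j
         = w1 * std_normal_tail ((1 - c) / (p + q) * \<mu>) + w2 * (1 - std_normal_tail (c / q * \<mu>))"
proof -
  let ?m = "\<lambda>i::nat. if i = 1 then - \<mu> else c * \<mu>"
  let ?s = "\<lambda>i::nat. if i = 1 then \<sigma>1 else \<sigma>2"
  let ?w = "\<lambda>i::nat. if i = 1 then w1 else w2"
  let ?e = "\<lambda>z. post_mean ?m ?s \<rho> j (?m j + ?s j * z)"
  have "0 < p" "0 < q" unfolding p_def q_def using assms by auto
  have "0 < ?s j" using assms by auto
  have posterior: "?e z 1 = - \<mu> + p * z" "?e z 2 = c * \<mu> + q * z" for z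
    using assms(1,2,10) unfolding post_mean_def p_def q_def by (auto simp: field_simps)
  have "discovery_value ?m ?s \<rho> ?w j = (LINT z|lborel. std_normal_density z * best_payoff ?w (?e z))"
    unfolding discovery_value_def using \<open>0 < ?s j\<close> by (rule integral_normal_density_standardize)
  also have "\<dots> = (LINT z|lborel. std_normal_density z *
      (w1 * indicator {(1 - c) / (p + q) * \<mu>..} z + w2 * indicator {- (c / q * \<mu>)..} z))"
    unfolding best_payoff_two_projects[OF assms(4-6)] posterior
      approval_thresholds[OF \<open>0 < p\<close> \<open>0 < q\<close> assms(7-9)]
    by (simp add: indicator_def)
  also have "\<dots> = w1 * std_normal_tail ((1 - c) / (p + q) * \<mu>) + w2 * (1 - std_normal_tail (c / q * \<mu>))"
    by (rule integral_std_normal_density_indicators)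
  finally show ?thesis .
qed

lemma rate_order_iff:
  fixes \<sigma> \<tau> c :: real
  assumes "0 < \<sigma>" "0 < \<tau>"
  shows "c / \<sigma> < (1 - c) / \<tau> \<longleftrightarrow> c < \<sigma> / (\<sigma> + \<tau>)"
    and "(1 - c) / \<tau> < c / \<sigma> \<longleftrightarrow> \<sigma> / (\<sigma> + \<tau>) < c"
  using assms by (simp_all add: field_simps)

lemma discovery_rate_comparisons:
  fixes \<sigma>1 \<sigma>2 \<rho> c :: real
  assumes "0 < \<sigma>1" "\<sigma>1 < \<sigma>2" "0 < \<rho>" "\<rho> < 1" "0 < c" "c < 1"
  shows "(1 - c) / (\<rho> * \<sigma>1 + \<sigma>2) < (1 - c) / (\<sigma>1 + \<rho> * \<sigma>2)"
    and "c / \<sigma>2 < c / (\<rho> * \<sigma>2)"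
    and "c / \<sigma>2 < (1 - c) / (\<rho> * \<sigma>1 + \<sigma>2) \<longleftrightarrow> c < \<sigma>2 / (\<rho> * \<sigma>1 + 2 * \<sigma>2)"
    and "(1 - c) / (\<rho> * \<sigma>1 + \<sigma>2) < c / \<sigma>2 \<longleftrightarrow> \<sigma>2 / (\<rho> * \<sigma>1 + 2 * \<sigma>2) < c"
proof -
  have "0 < \<sigma>2" "0 < \<rho> * \<sigma>1 + \<sigma>2" using assms by (simp_all add: add_pos_pos)
  have "0 < (1 - \<rho>) * (\<sigma>2 - \<sigma>1)" using assms by simp
  then have "\<sigma>1 + \<rho> * \<sigma>2 < \<rho> * \<sigma>1 + \<sigma>2" by (simp add: algebra_simps)
  then show "(1 - c) / (\<rho> * \<sigma>1 + \<sigma>2) < (1 - c) / (\<sigma>1 + \<rho> * \<sigma>2)"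
    using assms by (intro divide_strict_left_mono) (simp_all add: add_pos_pos)
  show "c / \<sigma>2 < c / (\<rho> * \<sigma>2)"
    using assms \<open>0 < \<sigma>2\<close> by (intro divide_strict_left_mono) simp_all
  show "c / \<sigma>2 < (1 - c) / (\<rho> * \<sigma>1 + \<sigma>2) \<longleftrightarrow> c < \<sigma>2 / (\<rho> * \<sigma>1 + 2 * \<sigma>2)"
    and "(1 - c) / (\<rho> * \<sigma>1 + \<sigma>2) < c / \<sigma>2 \<longleftrightarrow> \<sigma>2 / (\<rho> * \<sigma>1 + 2 * \<sigma>2) < c"
    using rate_order_iff[OF \<open>0 < \<sigma>2\<close> \<open>0 < \<rho> * \<sigma>1 + \<sigma>2\<close>, of c]
    by (simp_all add: algebra_simps)
qed

lemma threshold_if_eventually_at_top: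
  fixes P Q :: "real \<Rightarrow> bool"
  assumes "eventually P at_top" and "\<And>\<mu>. 0 < \<mu> \<Longrightarrow> P \<mu> \<Longrightarrow> Q \<mu>"
  shows "\<exists>\<mu>0. \<forall>\<mu>. 0 < \<mu> \<and> \<mu>0 < \<mu> \<longrightarrow> Q \<mu>"
  using assms by (auto simp: eventually_at_top_dense)

theorem lemma1:
  fixes \<sigma>1 \<sigma>2 \<rho> w1 w2 :: real
  assumes "0 < \<sigma>1" and "\<sigma>1 < \<sigma>2"
    and "0 < \<rho>" and "\<rho> < 1"
    and "0 < w1" and "0 < w2" and "w1 + w2 = 1"
  defines "s \<equiv> (\<lambda>i::nat. if i = 1 then \<sigma>1 else \<sigma>2)"
    and "w \<equiv> (\<lambda>i::nat. if i = 1 then w1 else w2)"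
    and "m \<equiv> (\<lambda>(c::real) (\<mu>::real) (i::nat). if i = 1 then - \<mu> else c * \<mu>)"
    and "cstar \<equiv> \<rho> * \<sigma>2 / (\<sigma>1 + 2 * \<rho> * \<sigma>2)"
    and "cstarstar \<equiv> \<sigma>2 / (\<rho> * \<sigma>1 + 2 * \<sigma>2)"
  shows "(\<forall>c. cstar < c \<and> c < cstarstar \<longrightarrow>
            (\<exists>\<mu>0. \<forall>\<mu>. 0 < \<mu> \<and> \<mu>0 < \<mu> \<longrightarrow>
               discovery_value (m c \<mu>) s \<rho> w 1 > discovery_value (m c \<mu>) s \<rho> w 2))
       \<and> (\<forall>c. cstarstar < c \<and> c < 1 \<longrightarrow>
            (\<exists>\<mu>0. \<forall>\<mu>. 0 < \<mu> \<and> \<mu>0 < \<mu> \<longrightarrow>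
               discovery_value (m c \<mu>) s \<rho> w 2 > discovery_value (m c \<mu>) s \<rho> w 1))"
proof -
  let ?T = std_normal_tail
  have "0 < \<sigma>2" using assms by simp
  define a1 a2 b1 b2 :: "real \<Rightarrow> real"
    where "a1 c = (1 - c) / (\<sigma>1 + \<rho> * \<sigma>2)" and "a2 c = (1 - c) / (\<rho> * \<sigma>1 + \<sigma>2)"
      and "b1 c = c / (\<rho> * \<sigma>2)" and "b2 c = c / \<sigma>2" for c
  have gain: "discovery_value (m c \<mu>) s \<rho> w 1 - discovery_value (m c \<mu>) s \<rho> w 2
      = (w1 * ?T (a1 c * \<mu>) + w2 * ?T (b2 c * \<mu>)) - (w1 * ?T (a2 c * \<mu>) + w2 * ?T (b1 c * \<mu>))"
    if "0 \<le> c" "c < 1" "0 < \<mu>" for c \<mu>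
    using discovery_value_eq_tails[of \<sigma>1 \<sigma>2 \<rho> w1 w2 c \<mu> 1]
      discovery_value_eq_tails[of \<sigma>1 \<sigma>2 \<rho> w1 w2 c \<mu> 2] assms(1,3,5-7) \<open>0 < \<sigma>2\<close> that
    unfolding m_def s_def w_def a1_def a2_def b1_def b2_def by (simp add: algebra_simps)
  have rates: "0 \<le> a2 c" "a2 c < a1 c" "0 \<le> b2 c" "b2 c < b1 c"
    "b2 c < a2 c \<longleftrightarrow> c < cstarstar" "a2 c < b2 c \<longleftrightarrow> cstarstar < c" if "0 < c" "c < 1" for c
    using discovery_rate_comparisons[OF assms(1-4) that] assms \<open>0 < \<sigma>2\<close> that
    unfolding a1_def a2_def b1_def b2_def cstarstar_def by (simp_all add: add_pos_pos)
  have "0 < cstar" "0 < cstarstar" "cstarstar < 1"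
    using assms \<open>0 < \<sigma>2\<close> unfolding cstar_def cstarstar_def
    by (simp_all add: add_pos_pos field_simps)
  show ?thesis
  proof (intro conjI allI impI)
    fix c assume "cstar < c \<and> c < cstarstar"
    then have c: "0 < c" "c < 1" "c < cstarstar" using \<open>0 < cstar\<close> \<open>cstarstar < 1\<close> by auto
    have "eventually (\<lambda>\<mu>. w1 * ?T (a2 c * \<mu>) + w2 * ?T (b1 c * \<mu>)
                           < w1 * ?T (a1 c * \<mu>) + w2 * ?T (b2 c * \<mu>)) at_top"
      using assms rates[OF c(1,2)] c by (intro slowest_tail_dominates) auto
    then show "\<exists>\<mu>0. \<forall>\<mu>. 0 < \<mu> \<and> \<mu>0 < \<mu> \<longrightarrow>
        discovery_value (m c \<mu>) s \<rho> w 1 > discovery_value (m c \<mu>) s \<rho> w 2"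
      by (rule threshold_if_eventually_at_top) (use gain[of c] c in fastforce)
  next
    fix c assume "cstarstar < c \<and> c < 1"
    then have c: "0 < c" "c < 1" "cstarstar < c" using \<open>0 < cstarstar\<close> by auto
    have "eventually (\<lambda>\<mu>. w2 * ?T (b2 c * \<mu>) + w1 * ?T (a1 c * \<mu>)
                           < w2 * ?T (b1 c * \<mu>) + w1 * ?T (a2 c * \<mu>)) at_top"
      using assms rates[OF c(1,2)] c by (intro slowest_tail_dominates) auto
    then show "\<exists>\<mu>0. \<forall>\<mu>. 0 < \<mu> \<and> \<mu>0 < \<mu> \<longrightarrow>
        discovery_value (m c \<mu>) s \<rho> w 2 > discovery_value (m c \<mu>) s \<rho> w 1"
      by (rule threshold_if_eventually_at_top) (use gain[of c] c in fastforce)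
  qed
qed

end
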